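(* Let $b\ge g$ be positive integers, $m=b+g$, and let $W$ be a binary-input channel, with level-$n$ channels $L_n^{(i)}$, $R_n^{(j)}$ as defined in the context. Then for all $n\ge1$: $I(L_{n+1}^{(i)})\le I(L_n^{(i)})$ for all $1\le i\le b$; $I(R_{n+1}^{(1)})\ge I(R_n^{(g)})$; and $I(R_{n+1}^{(j)})\ge I(R_n^{(j-1)})$ for all $1<j\le g$.
   Context: A binary-input channel $V\colon\{0,1\}\to\mathcal{Z}$ is a family of transition probabilities $V(z\mid x)$ on a discrete output alphabet; its symmetric capacity $I(V)$ is the mutual information (in bits) between a uniform input in $\{0,1\}$ and the output. Circuit associated with a pattern: a pattern is a word $\sigma=(\sigma_1,\dots,\sigma_m)\in\{L,R\}^m$ with $\sigma_1=L$ and $\sigma_m=R$. Choose distinct real numbers $p_1,\dots,p_{m-1}$ such that for $2\le k\le m-1$, $p_k<p_{k-1}$ if $\sigma_k=L$ and $p_k>p_{k-1}$ if $\sigma_k=R$. The map $u\mapsto x$ on $\{0,1\}^m$ is: start with $x=u$ and, for $k\in\{1,\dots,m-1\}$ taken in increasing order of $p_k$, replace $x_k$ by $x_k+x_{k+1}$ (mod 2). (The resulting map depends only on $\sigma$.) Given binary-input channels $V_1,\dots,V_m$, let $U_1,\dots,U_m$ be i.i.d. uniform on $\{0,1\}$, $X=x(U)$, and $Z_k$ the output of $V_k$ with input $X_k$, independently across $k$. The $k$-th synthesized channel is the channel from $U_k$ to $(Z_1,\dots,Z_m,U_1,\dots,U_{k-1})$; line $k$ is said to be of type $\sigma_k$.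 Pattern used (since $g\le b$): $\sigma=L^{b-g}(LR)^g$. Level-1 channels: apply the circuit with $V_1=\dots=V_m=W$; $L_1^{(i)}$ is the synthesized channel at the $i$-th line (from the top) of type $L$, and $R_1^{(j)}$ the one at the $j$-th line of type $R$. Level $n+1$ from level $n$: apply the same circuit with $(V_1,\dots,V_m)$ equal to the ordered list $R_n^{(g)}$, then $L_n^{(1)},\dots,L_n^{(b-g+1)}$, then the pairs $R_n^{(j)},L_n^{(b-g+1+j)}$ for $j=1,\dots,g-1$ (independent uses), and label the outputs $L_{n+1}^{(i)},R_{n+1}^{(j)}$ in the same way. *)

theory Defs
  imports "HOL-Probability.Probability_Mass_Function" "HOL-Analysis.Infinite_Sum"
begin

text \<open>Bits are booleans (False = 0, True = 1); addition mod 2 is (\<noteq>).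
  A binary-input channel with output alphabet 'a is a map bool \<Rightarrow> 'a pmf.\<close>

type_synonym 'a channel = "bool \<Rightarrow> 'a pmf"

text \<open>Symmetric capacity: mutual information (in bits) between a uniform input and
  the output, written out (0 log 0 = 0 is automatic since 0 * _ = 0).\<close>
definition sym_cap :: "'a channel \<Rightarrow> real" where
  "sym_cap V = (\<Sum>\<^sub>\<infinity> z. (\<Sum>x\<in>(UNIV::bool set).
      pmf (V x) z / 2 * log 2 (pmf (V x) z / ((pmf (V False) z + pmf (V True) z) / 2))))"

text \<open>Universal output alphabet for iterated synthesized channels: a base output
  of the original channel, or a tuple (Z_1..Z_m, U_1..U_{k-1}).\<close>
datatype 'z chout = Base 'z | Node "'z chout list" "bool list"

definition lift_channel :: "'z channel \<Rightarrow> 'z chout channel" where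
  "lift_channel W = (\<lambda>x. map_pmf Base (W x))"

datatype LR = L | R

text \<open>Positions are 1-based; sigma ! (k-1) is the type of line k.
  A concrete valid choice of the p_k: p_1 = 0, p_k = -k if sigma_k = L, p_k = k if R.\<close>
definition pval :: "LR list \<Rightarrow> nat \<Rightarrow> int" where
  "pval \<sigma> k = (if k = 1 then 0 else if \<sigma> ! (k - 1) = L then - int k else int k)"

definition circuit_step :: "nat \<Rightarrow> bool list \<Rightarrow> bool list" where
  "circuit_step k x = x[k - 1 := (x ! (k - 1) \<noteq> x ! k)]"

definition circuit :: "LR list \<Rightarrow> bool list \<Rightarrow> bool list" where
  "circuit \<sigma> u = fold circuit_step (sort_key (pval \<sigma>) [1..<length \<sigma>]) u"

fun seq_pmf :: "'a pmf list \<Rightarrow> 'a list pmf" where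
  "seq_pmf [] = return_pmf []"
| "seq_pmf (p # ps) = bind_pmf p (\<lambda>x. bind_pmf (seq_pmf ps) (\<lambda>xs. return_pmf (x # xs)))"

definition uniform_bits :: "nat \<Rightarrow> bool list pmf" where
  "uniform_bits n = pmf_of_set {us. length us = n}"

text \<open>k-th synthesized channel (k 1-based): from U_k to (Z_1..Z_m, U_1..U_{k-1}),
  with the other U_i i.i.d. uniform and Z_j the output of V_j on X_j.\<close>
definition synth :: "LR list \<Rightarrow> 'z chout channel list \<Rightarrow> nat \<Rightarrow> 'z chout channel" where
  "synth \<sigma> Vs k = (\<lambda>a.
     bind_pmf (uniform_bits (k - 1)) (\<lambda>pre.
     bind_pmf (uniform_bits (length \<sigma> - k)) (\<lambda>suf.
       let x = circuit \<sigma> (pre @ [a] @ suf)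
       in map_pmf (\<lambda>zs. Node zs pre) (seq_pmf (map2 (\<lambda>V xi. V xi) Vs x)))))"

definition apply_circuit :: "LR list \<Rightarrow> 'z chout channel list \<Rightarrow>
    'z chout channel list \<times> 'z chout channel list" where
  "apply_circuit \<sigma> Vs =
     (map (synth \<sigma> Vs) (filter (\<lambda>k. \<sigma> ! (k - 1) = L) [1..<length \<sigma> + 1]),
      map (synth \<sigma> Vs) (filter (\<lambda>k. \<sigma> ! (k - 1) = R) [1..<length \<sigma> + 1]))"

definition pattern :: "nat \<Rightarrow> nat \<Rightarrow> LR list" where
  "pattern b g = replicate (b - g) L @ concat (replicate g [L, R])"

text \<open>Input list for the next level (1-based notation of the paper):
  R^(g), L^(1..b-g+1), then R^(j), L^(b-g+1+j) for j = 1..g-1.\<close>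
definition next_inputs :: "nat \<Rightarrow> nat \<Rightarrow> 'c list \<times> 'c list \<Rightarrow> 'c list" where
  "next_inputs b g LRs = (let Ls = fst LRs; Rs = snd LRs in
     [Rs ! (g - 1)] @ map (\<lambda>i. Ls ! (i - 1)) [1..<b - g + 2]
     @ concat (map (\<lambda>j. [Rs ! (j - 1), Ls ! (b - g + j)]) [1..<g]))"

text \<open>Level 0 is an auxiliary device with every
  channel equal to W, so that next_inputs of level 0 is the all-W list and
  level 1 is exactly the circuit applied to W,...,W.\<close>
primrec level :: "nat \<Rightarrow> nat \<Rightarrow> 'z channel \<Rightarrow> nat \<Rightarrow>
    'z chout channel list \<times> 'z chout channel list" where
  "level b g W 0 = (replicate b (lift_channel W), replicate g (lift_channel W))"
| "level b g W (Suc n) = apply_circuit (pattern b g) (next_inputs b g (level b g W n))"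

definition Lch :: "nat \<Rightarrow> nat \<Rightarrow> 'z channel \<Rightarrow> nat \<Rightarrow> nat \<Rightarrow> 'z chout channel" where
  "Lch b g W n i = fst (level b g W n) ! (i - 1)"

definition Rch :: "nat \<Rightarrow> nat \<Rightarrow> 'z channel \<Rightarrow> nat \<Rightarrow> nat \<Rightarrow> 'z chout channel" where
  "Rch b g W n j = snd (level b g W n) ! (j - 1)"

end

theory Submission
  imports Defs
begin

text \<open>Symmetric capacity is unchanged by side information independent of the input, and
  cannot increase under a deterministic map of the output (data processing). For a line k
  of type L, replacing U_{k+1} by E + U_k with a fresh uniform bit E shows that flipping U_k
  only flips the input X_{k+1} of the channel below, so the synthesized channel of line k is
  a degraded version of V_{k+1} with independent side information. For a line r of type R
  preceded by lines j + 1, ..., r - 1 of type L, the input X_j is U_j + ... + U_r; knowing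
  U_1, ..., U_{r-1}, the synthesized channel of line r can strip off the known part, so it
  is an upgraded version of V_j. The wiring of level n into level n + 1 places L_n^{(i)} just
  below the i-th L line, R_n^{(g)} on top of the leading run of L lines, and R_n^{(j-1)} just
  above the j-th R line.\<close>

section \<open>Symmetric capacity\<close>

definition cap_term :: "real \<Rightarrow> real \<Rightarrow> real" where
  "cap_term a b = a / 2 * log 2 (a / ((a + b) / 2)) + b / 2 * log 2 (b / ((a + b) / 2))"

lemma sym_cap_eq_infsum_cap_term:
  "sym_cap V = (\<Sum>\<^sub>\<infinity>z. cap_term (pmf (V False) z) (pmf (V True) z))"
  unfolding sym_cap_def cap_term_def by (simp add: UNIV_bool add.commute)

lemma cap_term_commute: "cap_term a b = cap_term b a"
  unfolding cap_term_def by (simp add: add.commute)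

lemma cap_term_scale:
  assumes "0 \<le> c" shows "cap_term (c * a) (c * b) = c * cap_term a b"
proof (cases "c = 0")
  case False
  then have "c * a / ((c * a + c * b) / 2) = a / ((a + b) / 2)"
        and "c * b / ((c * a + c * b) / 2) = b / ((a + b) / 2)"
    by (simp_all add: distrib_left[symmetric])
  then show ?thesis unfolding cap_term_def by (simp add: field_simps)
qed (simp add: cap_term_def)

lemma diff_le_mult_ln_ratio:
  fixes a p m q :: real
  assumes "0 \<le> a" "a \<le> p" "0 \<le> m" "0 < q" "a > 0 \<Longrightarrow> m > 0"
  shows "a - m * p / q \<le> a * (ln (a / m) - ln (p / q))"
proof (cases "a = 0")
  case False
  then have pos: "a > 0" "m > 0" "p > 0" using assms by auto
  define x where "x = (a * q) / (m * p)"
  have x: "x > 0" using pos assms by (simp add: x_def)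
  have "a * (1 - 1 / x) \<le> a * ln x"
    using ln_le_minus_one[of "1 / x"] x pos by (simp add: ln_div mult_left_mono)
  moreover have "a * (1 - 1 / x) = a - m * p / q" and "ln x = ln (a / m) - ln (p / q)"
    using pos assms by (simp_all add: x_def field_simps ln_div ln_mult)
  ultimately show ?thesis by simp
qed (use assms in simp)

text \<open>Gibbs' inequality in the form needed for data processing: p and q are the
  probabilities of the coarser output symbol that the given one is merged into.\<close>
lemma cap_term_ge:
  fixes a b p q :: real
  assumes "0 \<le> a" "a \<le> p" "0 \<le> b" "b \<le> q"
  shows "a / 2 * log 2 (p / ((p + q) / 2)) + b / 2 * log 2 (q / ((p + q) / 2)) \<le> cap_term a b"
proof (cases "a + b = 0")
  case True
  then have "a = 0" "b = 0" using assms by auto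
  then show ?thesis by (simp add: cap_term_def)
next
  case False
  define m where "m = (a + b) / 2"
  define M where "M = (p + q) / 2"
  have m: "m > 0" and M: "M > 0" using assms False by (simp_all add: m_def M_def)
  have "a - m * p / M \<le> a * (ln (a / m) - ln (p / M))"
   and "b - m * q / M \<le> b * (ln (b / m) - ln (q / M))"
    by (rule diff_le_mult_ln_ratio; use assms m M in auto)+
  moreover have "(a - m * p / M) + (b - m * q / M) = 0"
    using M by (simp add: m_def M_def field_simps)
  ultimately have "0 \<le> (a * (ln (a / m) - ln (p / M)) + b * (ln (b / m) - ln (q / M))) / (2 * ln 2)"
    by simp
  moreover have "cap_term a b - (a / 2 * log 2 (p / M) + b / 2 * log 2 (q / M))
        = (a * (ln (a / m) - ln (p / M)) + b * (ln (b / m) - ln (q / M))) / (2 * ln 2)"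
    unfolding cap_term_def log_def m_def[symmetric] by (simp add: field_simps)
  ultimately show ?thesis unfolding M_def by linarith
qed

lemma cap_term_nonneg:
  assumes "0 \<le> a" "0 \<le> b" shows "0 \<le> cap_term a b"
proof (cases "a + b = 0")
  case False
  then have "(a + b) / ((a + b + (a + b)) / 2) = 1" by simp
  then show ?thesis using cap_term_ge[of a "a + b" b "a + b"] assms by (simp only: log_one) simp
next
  case True
  then have "a = 0" "b = 0" using assms by auto
  then show ?thesis by (simp add: cap_term_def)
qed

lemma cap_term_le_average:
  assumes "0 \<le> a" "0 \<le> b" shows "cap_term a b \<le> (a + b) / 2"
proof -
  have "x / 2 * log 2 (x / ((a + b) / 2)) \<le> x / 2" if "0 \<le> x" "x \<le> a + b" for x
  proof (cases "x = 0")
    case False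
    then have "log 2 (x / ((a + b) / 2)) \<le> log 2 2"
      using that by (subst log_le_cancel_iff) (auto simp: field_simps)
    then show ?thesis using that by (simp add: mult_left_le)
  qed simp
  from this[of a] this[of b] show ?thesis using assms unfolding cap_term_def by simp
qed

lemma summable_on_pmf: "pmf p summable_on A"
  using pmf_abs_summable abs_summable_equivalent summable_on_iff_abs_summable_on_real by blast

lemma infsum_pmf_eq_measure: "(\<Sum>\<^sub>\<infinity>x\<in>A. pmf p x) = measure p A"
  using pmf_abs_summable measure_pmf_conv_infsetsum infsetsum_infsum by metis

lemma summable_on_cap_term: "(\<lambda>z. cap_term (pmf p z) (pmf q z)) summable_on A"
proof (rule summable_on_comparison_test)
  have "(\<lambda>z. (pmf p z + pmf q z) * (1 / 2)) summable_on A"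
    by (intro summable_on_cmult_left summable_on_add summable_on_pmf)
  then show "(\<lambda>z. (pmf p z + pmf q z) / 2) summable_on A" by simp
qed (use cap_term_le_average cap_term_nonneg in auto)

lemma has_sum_fibres:
  fixes t :: "'a \<Rightarrow> real"
  assumes "(t has_sum s) UNIV"
  shows "((\<lambda>z. \<Sum>\<^sub>\<infinity>y\<in>f -` {z}. t y) has_sum s) UNIV"
proof (rule has_sum_Sigma'[where f = "\<lambda>(z, y). t y" and B = "\<lambda>z. f -` {z}"])
  have "Sigma UNIV (\<lambda>z. f -` {z}) = (\<lambda>y. (f y, y)) ` UNIV" by auto
  moreover have "inj (\<lambda>y. (f y, y))" by (auto simp: inj_def)
  ultimately show "((\<lambda>(z, y). t y) has_sum s) (Sigma UNIV (\<lambda>z. f -` {z}))"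
    using assms by (simp add: has_sum_reindex o_def)
  show "((\<lambda>y. (\<lambda>(z, y). t y) (z, y)) has_sum (\<Sum>\<^sub>\<infinity>y\<in>f -` {z}. t y)) (f -` {z})" for z
    using summable_on_subset_banach[OF has_sum_imp_summable[OF assms]] by (simp add: has_sum_infsum)
qed

lemma cap_term_map_pmf_le:
  "cap_term (pmf (map_pmf f p) z) (pmf (map_pmf f q) z)
     \<le> (\<Sum>\<^sub>\<infinity>y\<in>f -` {z}. cap_term (pmf p y) (pmf q y))"
proof -
  let ?P = "pmf (map_pmf f p) z" and ?Q = "pmf (map_pmf f q) z"
  define \<alpha> where "\<alpha> = log 2 (?P / ((?P + ?Q) / 2)) / 2"
  define \<beta> where "\<beta> = log 2 (?Q / ((?P + ?Q) / 2)) / 2"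
  have fibre: "pmf (map_pmf f r) z = (\<Sum>\<^sub>\<infinity>y\<in>f -` {z}. pmf r y)" for r
    by (simp add: pmf_map infsum_pmf_eq_measure)
  have le: "pmf r y \<le> pmf (map_pmf f r) z" if "f y = z" for r y
  proof -
    have "measure r {y} \<le> measure r (f -` {z})"
      using that by (intro measure_pmf.finite_measure_mono) auto
    then show ?thesis by (simp add: measure_pmf_single pmf_map)
  qed
  have "cap_term ?P ?Q = ?P * \<alpha> + ?Q * \<beta>"
    unfolding cap_term_def \<alpha>_def \<beta>_def by simp
  also have "\<dots> = (\<Sum>\<^sub>\<infinity>y\<in>f -` {z}. pmf p y * \<alpha>) + (\<Sum>\<^sub>\<infinity>y\<in>f -` {z}. pmf q y * \<beta>)"
    unfolding fibre by (simp add: infsum_cmult_left summable_on_pmf)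
  also have "\<dots> = (\<Sum>\<^sub>\<infinity>y\<in>f -` {z}. pmf p y * \<alpha> + pmf q y * \<beta>)"
    by (intro infsum_add[symmetric] summable_on_cmult_left summable_on_pmf)
  also have "\<dots> \<le> (\<Sum>\<^sub>\<infinity>y\<in>f -` {z}. cap_term (pmf p y) (pmf q y))"
  proof (rule infsum_mono)
    show "(\<lambda>y. pmf p y * \<alpha> + pmf q y * \<beta>) summable_on f -` {z}"
      by (intro summable_on_add summable_on_cmult_left summable_on_pmf)
    fix y assume "y \<in> f -` {z}"
    then show "pmf p y * \<alpha> + pmf q y * \<beta> \<le> cap_term (pmf p y) (pmf q y)"
      using cap_term_ge[of "pmf p y" ?P "pmf q y" ?Q] le[of y p] le[of y q]
      unfolding \<alpha>_def \<beta>_def by (simp add: mult.commute)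
  qed (rule summable_on_cap_term)
  finally show ?thesis .
qed

theorem sym_cap_map_pmf_le: "sym_cap (\<lambda>a. map_pmf f (V a)) \<le> sym_cap V"
proof -
  let ?t = "\<lambda>y. cap_term (pmf (V False) y) (pmf (V True) y)"
  have "((\<lambda>z. \<Sum>\<^sub>\<infinity>y\<in>f -` {z}. ?t y) has_sum sym_cap V) UNIV"
    unfolding sym_cap_eq_infsum_cap_term
    by (rule has_sum_fibres) (simp add: has_sum_infsum summable_on_cap_term)
  then show ?thesis
    unfolding sym_cap_eq_infsum_cap_term[of "\<lambda>a. map_pmf f (V a)"]
    by (intro has_sum_mono[OF has_sum_infsum] summable_on_cap_term) (use cap_term_map_pmf_le in auto)
qed

lemma pmf_bind_map_Pair:
  "pmf (bind_pmf S (\<lambda>s. map_pmf (Pair s) (K s))) (s, y) = pmf S s * pmf (K s) y"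
proof -
  have "pmf (map_pmf (Pair s') (K s')) (s, y) = indicator {s} s' * pmf (K s) y" for s'
  proof (cases "s' = s")
    case True
    then show ?thesis using pmf_map_inj'[of "Pair s" "K s" y] by (simp add: inj_on_def)
  next
    case False
    then have "(s, y) \<notin> set_pmf (map_pmf (Pair s') (K s'))" by auto
    then show ?thesis using False by (simp add: set_pmf_eq)
  qed
  then show ?thesis by (simp add: pmf_bind measure_pmf_single)
qed

text \<open>Side information independent of the input, together with a known shift of the
  input, neither helps nor hurts.\<close>
theorem sym_cap_side_info:
  "sym_cap (\<lambda>a. bind_pmf S (\<lambda>s. map_pmf (Pair s) (V (c s \<noteq> a)))) = sym_cap V"
proof -
  define t where "t y = cap_term (pmf (V False) y) (pmf (V True) y)" for y
  have pointwise: "cap_term (pmf (bind_pmf S (\<lambda>s. map_pmf (Pair s) (V (c s \<noteq> False)))) sy)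
                       (pmf (bind_pmf S (\<lambda>s. map_pmf (Pair s) (V (c s \<noteq> True)))) sy)
            = pmf S (fst sy) * t (snd sy)" for sy
    by (cases sy; cases "c (fst sy)")
      (simp_all add: pmf_bind_map_Pair cap_term_scale t_def cap_term_commute)
  have fibre: "((\<lambda>y. pmf S s * t y) has_sum (pmf S s * sym_cap V)) UNIV" for s
    unfolding sym_cap_eq_infsum_cap_term t_def
    by (intro has_sum_cmult_right has_sum_infsum summable_on_cap_term)
  have total: "((\<lambda>s. pmf S s * sym_cap V) has_sum sym_cap V) UNIV"
    using has_sum_cmult_left[OF has_sum_infsum[OF summable_on_pmf[of S UNIV]], of "sym_cap V"]
    by (simp add: infsum_pmf_eq_measure)
  have "((\<lambda>(s, y). pmf S s * t y) has_sum sym_cap V) (Sigma UNIV (\<lambda>_. UNIV))"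
  proof (rule has_sum_SigmaI[OF _ total])
    show "(\<lambda>(s, y). pmf S s * t y) summable_on Sigma UNIV (\<lambda>_. UNIV)"
      by (rule summable_on_SigmaI[OF _ has_sum_imp_summable[OF total]])
        (use fibre in \<open>auto simp: t_def cap_term_nonneg\<close>)
  qed (use fibre in simp)
  then have "(\<Sum>\<^sub>\<infinity>sy. pmf S (fst sy) * t (snd sy)) = sym_cap V"
    by (simp add: infsumI split_def)
  moreover have "sym_cap (\<lambda>a. bind_pmf S (\<lambda>s. map_pmf (Pair s) (V (c s \<noteq> a))))
      = (\<Sum>\<^sub>\<infinity>sy. pmf S (fst sy) * t (snd sy))"
    by (subst sym_cap_eq_infsum_cap_term) (simp only: pointwise)
  ultimately show ?thesis by simp
qed

section \<open>Independent products and uniform bits\<close>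

lemma map_pmf_nth_seq_pmf: "i < length ps \<Longrightarrow> map_pmf (\<lambda>zs. zs ! i) (seq_pmf ps) = ps ! i"
proof (induction ps arbitrary: i)
  case (Cons p ps)
  then show ?case
    by (cases i) (simp_all add: map_bind_pmf bind_return_pmf' bind_pmf_const
        map_pmf_def[symmetric] bind_map_pmf[symmetric] map_pmf_comp)
qed simp

lemma seq_pmf_list_update:
  "i < length ps \<Longrightarrow> seq_pmf (ps[i := q]) = bind_pmf (seq_pmf ps) (\<lambda>zs. map_pmf (\<lambda>y. zs[i := y]) q)"
proof (induction ps arbitrary: i)
  case (Cons p ps)
  show ?case
  proof (cases i)
    case 0
    then show ?thesis
      by (simp add: bind_commute_pmf[of q] bind_assoc_pmf bind_return_pmf bind_pmf_const map_pmf_def)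
  next
    case (Suc j)
    then show ?thesis
      using Cons by (simp add: bind_assoc_pmf bind_return_pmf map_pmf_def)
  qed
qed simp

definition fair_coin :: "bool pmf" where
  "fair_coin = pmf_of_set UNIV"

lemma bind_fair_coin_xor: "bind_pmf fair_coin (\<lambda>e. f (e \<noteq> c)) = bind_pmf fair_coin f"
  by (rule pmf_eqI) (cases c; simp add: fair_coin_def pmf_bind_pmf_of_set UNIV_bool)

lemma bit_lists_finite_nonempty:
  "finite {us :: bool list. length us = n}" "{us :: bool list. length us = n} \<noteq> {}"
  using finite_lists_length_eq[of "UNIV :: bool set" n] by (auto intro: exI[of _ "replicate n False"])

lemma set_uniform_bits: "set_pmf (uniform_bits n) = {us. length us = n}"
  unfolding uniform_bits_def using bit_lists_finite_nonempty by simp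

lemma pmf_uniform_bits: "pmf (uniform_bits n) us = (if length us = n then 1 / 2 ^ n else 0)"
  using bit_lists_finite_nonempty card_lists_length_eq[of "UNIV :: bool set" n]
  by (simp add: uniform_bits_def)

lemma uniform_bits_Suc:
  "uniform_bits (Suc n) = bind_pmf fair_coin (\<lambda>e. map_pmf (Cons e) (uniform_bits n))"
proof (rule pmf_eqI)
  fix us :: "bool list"
  have "pmf (map_pmf (Cons e) (uniform_bits n)) us
      = (case us of [] \<Rightarrow> 0 | x # us' \<Rightarrow> if x = e then pmf (uniform_bits n) us' else 0)" for e
  proof (cases "us \<in> Cons e ` UNIV")
    case True
    then show ?thesis using pmf_map_inj'[of "Cons e" "uniform_bits n"] by (auto simp: inj_def)
  next
    case False
    then have "us \<notin> set_pmf (map_pmf (Cons e) (uniform_bits n))" by auto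
    with False show ?thesis by (auto simp: set_pmf_eq split: list.split)
  qed
  then show "pmf (uniform_bits (Suc n)) us = pmf (bind_pmf fair_coin (\<lambda>e. map_pmf (Cons e) (uniform_bits n))) us"
    by (auto simp: fair_coin_def pmf_bind_pmf_of_set UNIV_bool pmf_uniform_bits split: list.split)
qed

section \<open>The circuit\<close>

definition occurs_before :: "'a list \<Rightarrow> 'a \<Rightarrow> 'a \<Rightarrow> bool" where
  "occurs_before os a b \<longleftrightarrow> (\<exists>xs ys. os = xs @ ys \<and> a \<in> set xs \<and> b \<in> set ys)"

lemma occurs_before_in_set: "occurs_before os a b \<Longrightarrow> a \<in> set os \<and> b \<in> set os"
  unfolding occurs_before_def by auto

lemma occurs_before_snoc:
  "occurs_before (os @ [i]) a b \<longleftrightarrow> occurs_before os a b \<or> (a \<in> set os \<and> b = i)"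
proof
  assume "occurs_before (os @ [i]) a b"
  then obtain xs ys where split: "os @ [i] = xs @ ys" "a \<in> set xs" "b \<in> set ys"
    unfolding occurs_before_def by blast
  then show "occurs_before os a b \<or> (a \<in> set os \<and> b = i)"
    by (cases ys rule: rev_cases) (auto simp: occurs_before_def)
next
  assume "occurs_before os a b \<or> (a \<in> set os \<and> b = i)"
  then show "occurs_before (os @ [i]) a b"
  proof
    assume "occurs_before os a b"
    then obtain xs ys where "os = xs @ ys" "a \<in> set xs" "b \<in> set ys"
      unfolding occurs_before_def by blast
    then show ?thesis unfolding occurs_before_def by (intro exI[of _ xs] exI[of _ "ys @ [i]"]) auto
  next
    assume "a \<in> set os \<and> b = i"
    then show ?thesis unfolding occurs_before_def by (intro exI[of _ os] exI[of _ "[i]"]) auto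
  qed
qed

lemma occurs_before_sort_key_iff:
  fixes key :: "'a \<Rightarrow> 'b::linorder"
  assumes "inj_on key (set xs)" "a \<in> set xs" "b \<in> set xs" "a \<noteq> b"
  shows "occurs_before (sort_key key xs) a b \<longleftrightarrow> key a < key b"
proof -
  define os where "os = sort_key key xs"
  have le: "key c \<le> key d" if before: "occurs_before os c d" for c d
  proof -
    obtain us vs where "os = us @ vs" "c \<in> set us" "d \<in> set vs"
      using before unfolding occurs_before_def by blast
    moreover have "sorted (map key os)" by (simp add: os_def)
    ultimately show ?thesis by (auto simp: sorted_append)
  qed
  have "occurs_before os b a \<or> occurs_before os a b"
  proof -
    obtain us vs where decomp: "os = us @ a # vs"
      using assms split_list[of a os] unfolding os_def by auto
    moreover have "b \<in> set os" "b \<noteq> a" using assms unfolding os_def by auto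
    ultimately have "b \<in> set us \<or> b \<in> set vs" by auto
    then show ?thesis
    proof
      assume "b \<in> set us"
      then show ?thesis unfolding occurs_before_def decomp by (intro disjI1 exI[of _ us] exI[of _ "a # vs"]) auto
    next
      assume "b \<in> set vs"
      then show ?thesis unfolding occurs_before_def decomp by (intro disjI2 exI[of _ "us @ [a]"] exI[of _ vs]) auto
    qed
  qed
  moreover have "key a \<noteq> key b" using assms inj_on_eq_iff by metis
  ultimately show ?thesis unfolding os_def[symmetric] using le[of a b] le[of b a] by auto
qed

lemma length_fold_circuit_step[simp]: "length (fold circuit_step os u) = length u"
  by (induction os arbitrary: u) (auto simp: circuit_step_def)

lemma length_circuit[simp]: "length (circuit \<sigma> u) = length u"
  by (simp add: circuit_def)

text \<open>Step k reads bit k + 1 (1-based) after it has been updated iff step k + 1 comes first.\<close>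
lemma nth_fold_circuit_step:
  assumes "distinct os" "\<forall>k\<in>set os. 1 \<le> k \<and> k < length u" "s < length u"
  shows "fold circuit_step os u ! s =
     (u ! s \<noteq> (Suc s \<in> set os \<and>
       (if Suc (Suc s) \<in> set os \<and> occurs_before os (Suc (Suc s)) (Suc s)
        then fold circuit_step os u ! Suc s else u ! Suc s)))"
  using assms
proof (induction os arbitrary: s rule: rev_induct)
  case Nil then show ?case by (simp add: occurs_before_def)
next
  case (snoc i os)
  define y where "y = fold circuit_step os u"
  have IH: "y ! t = (u ! t \<noteq> (Suc t \<in> set os \<and>
       (if Suc (Suc t) \<in> set os \<and> occurs_before os (Suc (Suc t)) (Suc t) then y ! Suc t else u ! Suc t)))"
    if "t < length u" for t
    using snoc that by (simp add: y_def)
  have i: "1 \<le> i" "i < length u" "i \<notin> set os" using snoc.prems by auto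
  have ly: "length y = length u" by (simp add: y_def)
  define y' where "y' = y[i - 1 := (y ! (i - 1) \<noteq> y ! i)]"
  have y': "fold circuit_step (os @ [i]) u = y'" by (simp add: y_def y'_def circuit_step_def)
  have y'_nth: "y' ! t = (if t = i - 1 then (y ! (i - 1) \<noteq> y ! i) else y ! t)" if "t < length u" for t
    using that ly i by (simp add: y'_def nth_list_update)
  note s = \<open>s < length u\<close>
  show ?case
  proof (cases "s = i - 1")
    case True
    then have si: "Suc s = i" using i by simp
    have "y ! (i - 1) = u ! (i - 1)" using IH[of "i - 1"] i si by simp
    moreover have "occurs_before (os @ [i]) (Suc i) i \<longleftrightarrow> Suc i \<in> set os"
      using occurs_before_snoc[of os i "Suc i" i] occurs_before_in_set[of os "Suc i" i] i by auto
    moreover have "Suc i \<notin> set os \<Longrightarrow> y ! i = u ! i"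
      using IH[of i] i by auto
    ultimately show ?thesis unfolding y' using y'_nth[of s] y'_nth[of i] s si i by auto
  next
    case False
    have member: "Suc s \<in> set (os @ [i]) \<longleftrightarrow> Suc s \<in> set os" using False i by auto
    have "occurs_before (os @ [i]) (Suc (Suc s)) (Suc s) \<longleftrightarrow> occurs_before os (Suc (Suc s)) (Suc s)"
      using occurs_before_snoc[of os i "Suc (Suc s)" "Suc s"] False i by auto
    then have cond: "(Suc (Suc s) \<in> set (os @ [i]) \<and> occurs_before (os @ [i]) (Suc (Suc s)) (Suc s))
        \<longleftrightarrow> (Suc (Suc s) \<in> set os \<and> occurs_before os (Suc (Suc s)) (Suc s))"
      using occurs_before_in_set[of os "Suc (Suc s)" "Suc s"] by auto
    have "y' ! Suc s = y ! Suc s" if "Suc (Suc s) \<in> set os \<and> occurs_before os (Suc (Suc s)) (Suc s)"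
    proof -
      have "Suc s \<in> set os" using that occurs_before_in_set[of os "Suc (Suc s)" "Suc s"] by blast
      then show ?thesis using snoc.prems that i y'_nth[of "Suc s"] by (auto simp: Suc_le_eq)
    qed
    then show ?thesis unfolding y' member cond using y'_nth[of s] s False IH[of s] by auto
  qed
qed

lemma inj_on_pval: "inj_on (pval \<sigma>) {1..<m}"
  unfolding inj_on_def pval_def by auto

text \<open>Line s + 2 (1-based) is of type L iff its step precedes that of line s + 1, which
  then reads the final output bit s + 1 instead of the input bit (0-based indices).\<close>
lemma nth_circuit:
  assumes "length u = length \<sigma>" "s < length \<sigma>"
  shows "circuit \<sigma> u ! s = (u ! s \<noteq> (Suc s < length \<sigma> \<and>
            (if Suc (Suc s) < length \<sigma> \<and> \<sigma> ! Suc s = L then circuit \<sigma> u ! Suc s else u ! Suc s)))"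
proof -
  define os where "os = sort_key (pval \<sigma>) [1..<length \<sigma>]"
  have "occurs_before os (Suc (Suc s)) (Suc s) \<longleftrightarrow> \<sigma> ! Suc s = L" if "Suc (Suc s) < length \<sigma>"
  proof -
    have "occurs_before os (Suc (Suc s)) (Suc s) \<longleftrightarrow> pval \<sigma> (Suc (Suc s)) < pval \<sigma> (Suc s)"
      unfolding os_def using that inj_on_pval[of \<sigma> "length \<sigma>"] by (intro occurs_before_sort_key_iff) auto
    then show ?thesis by (cases "\<sigma> ! Suc s") (auto simp: pval_def)
  qed
  moreover have "circuit \<sigma> u = fold circuit_step os u" by (simp add: circuit_def os_def)
  ultimately show ?thesis
    using nth_fold_circuit_step[of os u s] assms by (auto simp: os_def Suc_le_eq)
qed

text \<open>Flipping input bits k and k + 1 (0-based) changes output bit k + 1 only: output bit k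
  sees both flips, and output bit k - 1 reads the unchanged output bit k because line k + 1
  is of type L.\<close>
lemma circuit_flip_adjacent:
  assumes lu: "length u = length \<sigma>" and k: "Suc k < length \<sigma>" and L: "\<sigma> ! k = L"
  shows "circuit \<sigma> (u[k := \<not> u ! k, Suc k := \<not> u ! Suc k])
       = (circuit \<sigma> u)[Suc k := \<not> circuit \<sigma> u ! Suc k]"
proof -
  define m where "m = length \<sigma>"
  define u' where "u' = u[k := \<not> u ! k, Suc k := \<not> u ! Suc k]"
  define x where "x = circuit \<sigma> u"
  define x' where "x' = circuit \<sigma> u'"
  have lu': "length u' = m" using lu by (simp add: u'_def m_def)
  have u': "u' ! t = (if t = k \<or> t = Suc k then \<not> u ! t else u ! t)" if "t < m" for t
    using that lu k by (auto simp: u'_def m_def nth_list_update)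
  have x: "x ! s = (u ! s \<noteq> (Suc s < m \<and>
      (if Suc (Suc s) < m \<and> \<sigma> ! Suc s = L then x ! Suc s else u ! Suc s)))" if "s < m" for s
    using nth_circuit[OF lu, of s] that by (simp add: x_def m_def)
  have x': "x' ! s = (u' ! s \<noteq> (Suc s < m \<and>
      (if Suc (Suc s) < m \<and> \<sigma> ! Suc s = L then x' ! Suc s else u' ! Suc s)))" if "s < m" for s
    using nth_circuit[of u' \<sigma> s] lu' that by (simp add: x'_def m_def)
  have "s < m \<longrightarrow> x' ! s = (x ! s \<noteq> (s = Suc k))" if "s \<le> m" for s
    using that
  proof (induction s rule: inc_induct)
    case (step s)
    have IH: "Suc s < m \<Longrightarrow> x' ! Suc s = (x ! Suc s \<noteq> (Suc s = Suc k))" using step.IH by blast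
    consider "Suc k \<le> s" | "s = k" | "Suc s = k" | "Suc s < k" by linarith
    then show ?case
      using x[of s] x'[of s] IH u'[of s] u'[of "Suc s"] L k by cases (auto simp: m_def)
  qed simp
  moreover have "length x' = length x" using lu lu' by (simp add: x_def x'_def m_def)
  ultimately have "x' = x[Suc k := \<not> x ! Suc k]"
    using lu k by (intro nth_equalityI) (auto simp: x_def m_def nth_list_update)
  then show ?thesis by (simp add: x_def x'_def u'_def)
qed

definition xor_range :: "bool list \<Rightarrow> nat \<Rightarrow> nat \<Rightarrow> bool" where
  "xor_range u i j = foldr (\<noteq>) (map (nth u) [i..<j]) False"

lemma xor_range_step: "i < j \<Longrightarrow> xor_range u i j = (u ! i \<noteq> xor_range u (Suc i) j)"
  unfolding xor_range_def by (simp add: upt_rec)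

lemma xor_range_append: "j \<le> length u \<Longrightarrow> xor_range (u @ v) i j = xor_range u i j"
  unfolding xor_range_def
  by (rule arg_cong[where f = "\<lambda>l. foldr (\<noteq>) l False"]) (auto simp: nth_append)

lemma nth_circuit_L_run:
  assumes lu: "length u = length \<sigma>" and r: "r < length \<sigma>" "\<sigma> ! r = R"
    and L: "\<And>i. j < i \<Longrightarrow> i < r \<Longrightarrow> \<sigma> ! i = L" and j: "j < r"
  shows "circuit \<sigma> u ! j = (xor_range u j r \<noteq> u ! r)"
  using j L
proof (induction "r - j" arbitrary: j)
  case (Suc d)
  show ?case
  proof (cases "Suc j = r")
    case True
    then show ?thesis using nth_circuit[OF lu, of j] r by (auto simp: xor_range_def)
  next
    case False
    then have "circuit \<sigma> u ! Suc j = (xor_range u (Suc j) r \<noteq> u ! r)"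
      using Suc by simp
    then show ?thesis using nth_circuit[OF lu, of j] Suc False r by (simp add: xor_range_step) blast
  qed
qed simp

section \<open>Synthesized channels\<close>

text \<open>From the output of line r + 1 the decoder knows U_1, ..., U_r; it strips the known part
  off the input X_{j+1} = U_{j+1} + ... + U_{r+1} of channel j + 1 and so observes U_{r+1}
  through V_{j+1} with independent side information.\<close>
theorem sym_cap_synth_R_ge:
  fixes Vs :: "'z chout channel list"
  assumes lV: "length Vs = length \<sigma>" and r: "r < length \<sigma>" "\<sigma> ! r = R" and j: "j < r"
    and L: "\<And>i. j < i \<Longrightarrow> i < r \<Longrightarrow> \<sigma> ! i = L"
  shows "sym_cap (Vs ! j) \<le> sym_cap (synth \<sigma> Vs (Suc r))"
proof -
  define G :: "'z chout \<Rightarrow> bool list \<times> 'z chout" where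
    "G z = (case z of Node zs pre \<Rightarrow> (pre, zs ! j) | Base y \<Rightarrow> undefined)" for z
  have "map_pmf G (synth \<sigma> Vs (Suc r) a)
      = bind_pmf (uniform_bits r) (\<lambda>pre. map_pmf (Pair pre) ((Vs ! j) (xor_range pre j r \<noteq> a)))" for a
  proof -
    have "map_pmf G (synth \<sigma> Vs (Suc r) a)
        = bind_pmf (uniform_bits r) (\<lambda>pre. bind_pmf (uniform_bits (length \<sigma> - Suc r)) (\<lambda>suf.
            map_pmf (Pair pre) (map_pmf (\<lambda>zs. zs ! j)
              (seq_pmf (map2 (\<lambda>V xi. V xi) Vs (circuit \<sigma> (pre @ [a] @ suf)))))))"
      unfolding synth_def Let_def by (simp add: map_bind_pmf map_pmf_comp G_def)
    also have "\<dots> = bind_pmf (uniform_bits r) (\<lambda>pre. bind_pmf (uniform_bits (length \<sigma> - Suc r))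
        (\<lambda>suf. map_pmf (Pair pre) ((Vs ! j) (xor_range pre j r \<noteq> a))))"
    proof (intro bind_pmf_cong refl)
      fix pre suf
      assume "pre \<in> set_pmf (uniform_bits r)" "suf \<in> set_pmf (uniform_bits (length \<sigma> - Suc r))"
      then have lengths: "length pre = r" "length (pre @ [a] @ suf) = length \<sigma>"
        using r by (auto simp: set_uniform_bits)
      then have "circuit \<sigma> (pre @ [a] @ suf) ! j = (xor_range pre j r \<noteq> a)"
        using nth_circuit_L_run[OF lengths(2) r L j] by (simp add: xor_range_append nth_append)
      with lengths show "map_pmf (Pair pre) (map_pmf (\<lambda>zs. zs ! j)
              (seq_pmf (map2 (\<lambda>V xi. V xi) Vs (circuit \<sigma> (pre @ [a] @ suf)))))
            = map_pmf (Pair pre) ((Vs ! j) (xor_range pre j r \<noteq> a))"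
        using lV j r by (simp add: map_pmf_nth_seq_pmf)
    qed
    finally show ?thesis by (simp add: bind_pmf_const)
  qed
  then have "sym_cap (Vs ! j) = sym_cap (\<lambda>a. map_pmf G (synth \<sigma> Vs (Suc r) a))"
    using sym_cap_side_info[of "uniform_bits r" "Vs ! j" "\<lambda>pre. xor_range pre j r"] by simp
  also have "\<dots> \<le> sym_cap (synth \<sigma> Vs (Suc r))" by (rule sym_cap_map_pmf_le)
  finally show ?thesis .
qed

lemma synth_eq_bind_fair_coin:
  assumes "Suc k < length \<sigma>"
  shows "synth \<sigma> Vs (Suc k) a =
    bind_pmf (uniform_bits k) (\<lambda>pre. bind_pmf fair_coin (\<lambda>e.
    bind_pmf (uniform_bits (length \<sigma> - Suc (Suc k))) (\<lambda>rest.
      map_pmf (\<lambda>zs. Node zs pre) (seq_pmf (map2 (\<lambda>V xi. V xi) Vs (circuit \<sigma> (pre @ [a] @ (e \<noteq> a) # rest)))))))"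
proof -
  have "length \<sigma> - Suc k = Suc (length \<sigma> - Suc (Suc k))" using assms by simp
  then have "synth \<sigma> Vs (Suc k) a =
    bind_pmf (uniform_bits k) (\<lambda>pre. bind_pmf fair_coin (\<lambda>e.
    bind_pmf (uniform_bits (length \<sigma> - Suc (Suc k))) (\<lambda>rest.
      map_pmf (\<lambda>zs. Node zs pre) (seq_pmf (map2 (\<lambda>V xi. V xi) Vs (circuit \<sigma> (pre @ [a] @ e # rest)))))))"
    unfolding synth_def Let_def by (simp add: uniform_bits_Suc bind_map_pmf bind_assoc_pmf)
  then show ?thesis by (subst bind_fair_coin_xor[of _ a]) simp
qed

lemma circuit_xor_adjacent_input:
  assumes "length (pre @ [False] @ e # rest) = length \<sigma>" "\<sigma> ! length pre = L"
  defines "x \<equiv> circuit \<sigma> (pre @ [False] @ e # rest)"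
  shows "circuit \<sigma> (pre @ [a] @ (e \<noteq> a) # rest) = x[Suc (length pre) := (x ! Suc (length pre) \<noteq> a)]"
proof (cases a)
  case True
  let ?u = "pre @ [False] @ e # rest"
  have "pre @ [a] @ (e \<noteq> a) # rest = ?u[length pre := \<not> ?u ! length pre, Suc (length pre) := \<not> ?u ! Suc (length pre)]"
    using True by (simp add: list_update_append nth_append)
  then show ?thesis using circuit_flip_adjacent[of ?u \<sigma> "length pre"] assms True by (simp add: x_def)
qed (simp add: x_def)

lemma map2_apply_list_update:
  "i < length Vs \<Longrightarrow> map2 (\<lambda>V x. V x) Vs (xs[i := c]) = (map2 (\<lambda>V x. V x) Vs xs)[i := (Vs ! i) c]"
  using zip_update[of Vs i "Vs ! i" xs c] by (simp add: map_update)

text \<open>Flipping U_{k+1} together with U_{k+2} only flips X_{k+2}, so the channel of line k + 1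
  is a degraded version of V_{k+2} with independent side information.\<close>
theorem sym_cap_synth_L_le:
  fixes Vs :: "'z chout channel list"
  assumes lV: "length Vs = length \<sigma>" and k: "Suc k < length \<sigma>" and L: "\<sigma> ! k = L"
  shows "sym_cap (synth \<sigma> Vs (Suc k)) \<le> sym_cap (Vs ! Suc k)"
proof -
  define V where "V = Vs ! Suc k"
  define X where "X pre e rest = circuit \<sigma> (pre @ [False] @ e # rest)" for pre e rest
  define S where "S = bind_pmf (uniform_bits k) (\<lambda>pre. bind_pmf fair_coin (\<lambda>e.
     bind_pmf (uniform_bits (length \<sigma> - Suc (Suc k))) (\<lambda>rest. map_pmf (\<lambda>zs. (pre, X pre e rest ! Suc k, zs))
       (seq_pmf (map2 (\<lambda>V xi. V xi) Vs (X pre e rest))))))"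
  define F :: "(bool list \<times> bool \<times> 'z chout list) \<times> 'z chout \<Rightarrow> 'z chout" where
    "F sy = (case sy of ((pre, c, zs), y) \<Rightarrow> Node (zs[Suc k := y]) pre)" for sy
  have "synth \<sigma> Vs (Suc k) =
      (\<lambda>a. map_pmf F (bind_pmf S (\<lambda>s. map_pmf (Pair s) (V (fst (snd s) \<noteq> a)))))"
  proof
    fix a
    have "map_pmf (\<lambda>zs. Node zs pre) (seq_pmf (map2 (\<lambda>V xi. V xi) Vs (circuit \<sigma> (pre @ [a] @ (e \<noteq> a) # rest))))
        = map_pmf (\<lambda>zs. Node zs pre) (bind_pmf (seq_pmf (map2 (\<lambda>V xi. V xi) Vs (X pre e rest)))
            (\<lambda>zs. map_pmf (\<lambda>y. zs[Suc k := y]) (V (X pre e rest ! Suc k \<noteq> a))))"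
      if "length pre = k" "length rest = length \<sigma> - Suc (Suc k)" for pre e rest
      using that lV k circuit_xor_adjacent_input[of pre e rest \<sigma> a] L
      by (simp add: seq_pmf_list_update map2_apply_list_update X_def V_def)
    then show "synth \<sigma> Vs (Suc k) a =
        map_pmf F (bind_pmf S (\<lambda>s. map_pmf (Pair s) (V (fst (snd s) \<noteq> a))))"
      unfolding synth_eq_bind_fair_coin[OF k] S_def F_def
      by (auto simp: map_bind_pmf bind_map_pmf bind_assoc_pmf map_pmf_comp set_uniform_bits
          intro!: bind_pmf_cong)
  qed
  then have "sym_cap (synth \<sigma> Vs (Suc k)) \<le> sym_cap (\<lambda>a. bind_pmf S (\<lambda>s. map_pmf (Pair s) (V (fst (snd s) \<noteq> a))))"
    by (simp only: sym_cap_map_pmf_le)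
  also have "\<dots> = sym_cap V" by (rule sym_cap_side_info)
  finally show ?thesis by (simp add: V_def)
qed

section \<open>The pattern L^{b-g} (LR)^g\<close>

definition line_positions :: "LR list \<Rightarrow> LR \<Rightarrow> nat list" where
  "line_positions \<sigma> t = filter (\<lambda>k. \<sigma> ! (k - 1) = t) [1..<length \<sigma> + 1]"

lemma apply_circuit_eq_line_positions:
  "apply_circuit \<sigma> Vs = (map (synth \<sigma> Vs) (line_positions \<sigma> L), map (synth \<sigma> Vs) (line_positions \<sigma> R))"
  by (simp add: apply_circuit_def line_positions_def)

lemma set_line_positions:
  "k \<in> set (line_positions \<sigma> t) \<longleftrightarrow> 1 \<le> k \<and> k \<le> length \<sigma> \<and> \<sigma> ! (k - 1) = t"
  by (auto simp: line_positions_def)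

lemma line_positions_snoc:
  "line_positions (\<sigma> @ [t']) t = line_positions \<sigma> t @ (if t' = t then [Suc (length \<sigma>)] else [])"
proof -
  have "filter (\<lambda>k. (\<sigma> @ [t']) ! (k - 1) = t) [1..<length \<sigma> + 1] = line_positions \<sigma> t"
    unfolding line_positions_def by (intro filter_cong) (auto simp: nth_append)
  then show ?thesis by (simp add: line_positions_def)
qed

text \<open>Line numbers (1-based) of the i-th line of type L and of the j-th line of type R in
  L^P (LR)^g.\<close>
definition L_pos :: "nat \<Rightarrow> nat \<Rightarrow> nat" where
  "L_pos P i = (if i \<le> P then i else 2 * i - P - 1)"

definition R_pos :: "nat \<Rightarrow> nat \<Rightarrow> nat" where
  "R_pos P j = P + 2 * j"

lemma line_positions_replicate_LR:
  "line_positions (replicate P L @ concat (replicate g [L, R])) L = map (L_pos P) [1..<P + g + 1]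
   \<and> line_positions (replicate P L @ concat (replicate g [L, R])) R = map (R_pos P) [1..<g + 1]"
proof (induction g)
  case 0
  have "line_positions (replicate P L) t = (if t = L then [1..<P + 1] else [])" for t
    unfolding line_positions_def by (cases t) (auto simp del: upt_Suc intro!: filter_True filter_False)
  moreover have "map (L_pos P) [1..<P + 1] = [1..<P + 1]"
    by (rule map_idI) (auto simp: L_pos_def)
  ultimately show ?case by simp
next
  case (Suc g)
  define \<sigma> where "\<sigma> = replicate P L @ concat (replicate g [L, R])"
  have "replicate P L @ concat (replicate (Suc g) [L, R]) = (\<sigma> @ [L]) @ [R]"
    unfolding \<sigma>_def by (induction g) auto
  moreover have "length \<sigma> = P + 2 * g"
    unfolding \<sigma>_def by (induction g) auto
  ultimately have "line_positions (replicate P L @ concat (replicate (Suc g) [L, R])) L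
                    = line_positions \<sigma> L @ [P + 2 * g + 1]"
             and "line_positions (replicate P L @ concat (replicate (Suc g) [L, R])) R
                    = line_positions \<sigma> R @ [P + 2 * g + 2]"
    by (simp_all only: line_positions_snoc) simp_all
  moreover have "map (L_pos P) [1..<P + Suc g + 1] = map (L_pos P) [1..<P + g + 1] @ [P + 2 * g + 1]"
    by (simp add: L_pos_def)
  ultimately show ?case using Suc by (simp add: \<sigma>_def R_pos_def)
qed

lemma line_positions_pattern:
  assumes "g \<le> b"
  shows "line_positions (pattern b g) L = map (L_pos (b - g)) [1..<b + 1]"
    and "line_positions (pattern b g) R = map (R_pos (b - g)) [1..<g + 1]"
  using line_positions_replicate_LR[of "b - g" g] assms by (simp_all add: pattern_def)

lemma length_pattern: "g \<le> b \<Longrightarrow> length (pattern b g) = b + g"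
proof -
  have "length (concat (replicate g [L, R])) = 2 * g" by (induction g) auto
  then show "g \<le> b \<Longrightarrow> ?thesis" by (simp add: pattern_def)
qed

lemma
  assumes "s < length xs"
  shows nth_concat_map_pair_even: "concat (map (\<lambda>j. [f j, h j]) xs) ! (2 * s) = f (xs ! s)"
    and nth_concat_map_pair_odd: "concat (map (\<lambda>j. [f j, h j]) xs) ! (2 * s + 1) = h (xs ! s)"
  using assms
proof (induction xs arbitrary: s)
  case (Cons x xs)
  case 1 then show ?case using Cons.IH(1)[of "s - 1"] by (cases s) auto
next
  case (Cons x xs)
  case 2 then show ?case using Cons.IH(2)[of "s - 1"] by (cases s) auto
qed simp_all

lemma length_concat_map_pair[simp]: "length (concat (map (\<lambda>j. [f j, h j]) xs)) = 2 * length xs"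
  by (induction xs) auto

lemma length_next_inputs: "1 \<le> g \<Longrightarrow> length (next_inputs (P + g) g LRs) = P + 2 * g"
  by (cases g) (simp_all add: next_inputs_def Let_def)

text \<open>The 0-based index L_pos P i is the line just below the i-th L line.\<close>
lemma nth_next_inputs_L_pos:
  assumes "1 \<le> i" "i \<le> P + g"
  shows "next_inputs (P + g) g LRs ! L_pos P i = fst LRs ! (i - 1)"
proof (cases "i \<le> P + 1")
  case True
  then have "L_pos P i = i" by (auto simp: L_pos_def)
  then show ?thesis using assms True
    by (cases i) (auto simp: next_inputs_def Let_def nth_append simp del: upt_Suc)
next
  case False
  define s where "s = i - P - 2"
  have "L_pos P i = Suc (P + 1 + (2 * s + 1))" "Suc (i - 2) = i - 1" and s: "s < length [1..<g]"
    using False assms by (auto simp: L_pos_def s_def)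
  then show ?thesis
    using nth_concat_map_pair_odd[OF s, of "\<lambda>j. snd LRs ! (j - 1)" "\<lambda>j. fst LRs ! (P + j)"] False
    by (simp add: next_inputs_def Let_def nth_append s_def del: upt_Suc)
qed

lemma nth_next_inputs_0: "next_inputs b g LRs ! 0 = snd LRs ! (g - 1)"
  by (simp add: next_inputs_def Let_def)

text \<open>The 0-based index R_pos P j - 2 is the line just above the j-th R line.\<close>
lemma nth_next_inputs_R_pos:
  assumes "1 < j" "j \<le> g"
  shows "next_inputs (P + g) g LRs ! (R_pos P j - 2) = snd LRs ! (j - 2)"
proof -
  define s where "s = j - 2"
  have "R_pos P j - 2 = Suc (P + 1 + 2 * s)" and s: "s < length [1..<g]"
    using assms by (auto simp: R_pos_def s_def)
  then show ?thesis
    using nth_concat_map_pair_even[OF s, of "\<lambda>j. snd LRs ! (j - 1)" "\<lambda>j. fst LRs ! (P + j)"] assms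
    by (simp add: next_inputs_def Let_def nth_append s_def del: upt_Suc)
qed

lemma Lch_Suc:
  assumes "g \<le> b" "1 \<le> i" "i \<le> b"
  shows "Lch b g W (Suc n) i = synth (pattern b g) (next_inputs b g (level b g W n)) (L_pos (b - g) i)"
  using assms by (simp add: Lch_def apply_circuit_eq_line_positions line_positions_pattern del: upt_Suc)

lemma Rch_Suc:
  assumes "g \<le> b" "1 \<le> j" "j \<le> g"
  shows "Rch b g W (Suc n) j = synth (pattern b g) (next_inputs b g (level b g W n)) (R_pos (b - g) j)"
  using assms by (simp add: Rch_def apply_circuit_eq_line_positions line_positions_pattern del: upt_Suc)

lemma sym_cap_Lch_Suc_le:
  assumes "1 \<le> g" "1 \<le> i" "i \<le> P + g"
  shows "sym_cap (Lch (P + g) g W (Suc n) i) \<le> sym_cap (Lch (P + g) g W n i)"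
proof -
  define \<sigma> where "\<sigma> = pattern (P + g) g"
  define Vs where "Vs = next_inputs (P + g) g (level (P + g) g W n)"
  have "L_pos P i \<in> set (line_positions \<sigma> L)"
    using assms by (simp add: \<sigma>_def line_positions_pattern del: upt_Suc)
  then have "Suc (L_pos P i - 1) = L_pos P i" "\<sigma> ! (L_pos P i - 1) = L"
    by (auto simp: set_line_positions)
  moreover have "L_pos P i < length \<sigma>" "length Vs = length \<sigma>"
    using assms by (auto simp: \<sigma>_def Vs_def length_pattern length_next_inputs L_pos_def)
  ultimately have "sym_cap (synth \<sigma> Vs (L_pos P i)) \<le> sym_cap (Vs ! L_pos P i)"
    using sym_cap_synth_L_le[of Vs \<sigma> "L_pos P i - 1"] by simp
  moreover have "synth \<sigma> Vs (L_pos P i) = Lch (P + g) g W (Suc n) i"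
    using assms by (simp add: Lch_Suc \<sigma>_def Vs_def)
  moreover have "Vs ! L_pos P i = Lch (P + g) g W n i"
    using assms by (simp add: Vs_def nth_next_inputs_L_pos Lch_def)
  ultimately show ?thesis by simp
qed

lemma sym_cap_Rch_Suc_1_ge:
  assumes "1 \<le> g"
  shows "sym_cap (Rch (P + g) g W n g) \<le> sym_cap (Rch (P + g) g W (Suc n) 1)"
proof -
  define \<sigma> where "\<sigma> = pattern (P + g) g"
  define Vs where "Vs = next_inputs (P + g) g (level (P + g) g W n)"
  have "R_pos P 1 \<in> set (line_positions \<sigma> R)"
    using assms by (simp add: \<sigma>_def line_positions_pattern del: upt_Suc)
  then have "\<sigma> ! (P + 1) = R" by (simp add: set_line_positions R_pos_def)
  moreover have "\<sigma> ! k = L" if "0 < k" "k < P + 1" for k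
  proof -
    have "L_pos P (Suc k) = Suc k" using that by (auto simp: L_pos_def)
    moreover have "L_pos P (Suc k) \<in> set (line_positions \<sigma> L)"
      using assms that by (simp add: \<sigma>_def line_positions_pattern del: upt_Suc)
    ultimately show ?thesis by (simp add: set_line_positions)
  qed
  moreover have "P + 1 < length \<sigma>" "length Vs = length \<sigma>"
    using assms by (simp_all add: \<sigma>_def Vs_def length_pattern length_next_inputs)
  ultimately have "sym_cap (Vs ! 0) \<le> sym_cap (synth \<sigma> Vs (Suc (P + 1)))"
    by (intro sym_cap_synth_R_ge) auto
  moreover have "synth \<sigma> Vs (Suc (P + 1)) = Rch (P + g) g W (Suc n) 1"
    using assms by (simp add: Rch_Suc \<sigma>_def Vs_def R_pos_def)
  moreover have "Vs ! 0 = Rch (P + g) g W n g"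
    by (simp add: Vs_def nth_next_inputs_0 Rch_def)
  ultimately show ?thesis by simp
qed

lemma sym_cap_Rch_Suc_ge:
  assumes "1 < j" "j \<le> g"
  shows "sym_cap (Rch (P + g) g W n (j - 1)) \<le> sym_cap (Rch (P + g) g W (Suc n) j)"
proof -
  define \<sigma> where "\<sigma> = pattern (P + g) g"
  define Vs where "Vs = next_inputs (P + g) g (level (P + g) g W n)"
  have "R_pos P j \<in> set (line_positions \<sigma> R)"
    using assms by (simp add: \<sigma>_def line_positions_pattern del: upt_Suc)
  then have "\<sigma> ! (R_pos P j - 1) = R" by (simp add: set_line_positions)
  moreover have "R_pos P j - 1 < length \<sigma>" "length Vs = length \<sigma>"
    using assms by (simp_all add: \<sigma>_def Vs_def length_pattern length_next_inputs R_pos_def)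
  ultimately have "sym_cap (Vs ! (R_pos P j - 2)) \<le> sym_cap (synth \<sigma> Vs (Suc (R_pos P j - 1)))"
    by (intro sym_cap_synth_R_ge) (use assms in \<open>auto simp: R_pos_def\<close>)
  moreover have "synth \<sigma> Vs (Suc (R_pos P j - 1)) = Rch (P + g) g W (Suc n) j"
    using assms by (simp add: Rch_Suc \<sigma>_def Vs_def R_pos_def)
  moreover have "Vs ! (R_pos P j - 2) = Rch (P + g) g W n (j - 1)"
    using assms nth_next_inputs_R_pos[of j g P] by (simp add: Vs_def Rch_def numeral_2_eq_2)
  ultimately show ?thesis by simp
qed

text \<open>The bounds hold for n = 0 as well.\<close>
theorem mainTheorem7:
  fixes b g n :: nat and W :: "'z channel"
  assumes "1 \<le> g" and "g \<le> b" and "1 \<le> n"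
  shows "(\<forall>i. 1 \<le> i \<and> i \<le> b \<longrightarrow>
            sym_cap (Lch b g W (Suc n) i) \<le> sym_cap (Lch b g W n i))
       \<and> sym_cap (Rch b g W (Suc n) 1) \<ge> sym_cap (Rch b g W n g)
       \<and> (\<forall>j. 1 < j \<and> j \<le> g \<longrightarrow>
            sym_cap (Rch b g W (Suc n) j) \<ge> sym_cap (Rch b g W n (j - 1)))"
proof -
  obtain P where b: "b = P + g" using \<open>g \<le> b\<close> le_Suc_ex by (metis add.commute)
  show ?thesis
    unfolding b
    using sym_cap_Lch_Suc_le sym_cap_Rch_Suc_1_ge sym_cap_Rch_Suc_ge \<open>1 \<le> g\<close> by blast
qed

end
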